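(* Let $\mathbb T=\mathbb{R}/\mathbb{Z}$, let $\sigma_1,\sigma_2:\mathbb T\to\mathbb T$ be measurable maps with $\lambda_{\mathbb T}(\sigma_i^{-1}(\mathbb{Q}/\mathbb{Z}))=0$ for $i=1,2$, and let $\Gamma$ be the group generated by $h(x,y)=(x+\sigma_2(y),y)$ and $v(x,y)=(x,y+\sigma_1(x))$ acting on $\mathbb T^2$. Then the action of $\Gamma$ on $\mathbb T^2$ is ergodic with respect to the Lebesgue measure $\lambda_{\mathbb T^2}$.
   Context: $\lambda_{\mathbb T^d}$ denotes the normalized Lebesgue measure on $\mathbb T^d$; $h,v$ are invertible and preserve $\lambda_{\mathbb T^2}$. *)

theory Defs
  imports "HOL-Analysis.Analysis"
begin

text \<open>The circle T = R/Z is represented by the fundamental domain [0,1),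
  with addition modulo 1 given by frac. T^2 is the unit square [0,1)^2;
  Lebesgue measure on it (restriction of lborel) is already normalized.\<close>

definition torus :: "real set" where
  "torus = {0..<1}"

definition torus2 :: "(real \<times> real) set" where
  "torus2 = torus \<times> torus"

definition hmap :: "(real \<Rightarrow> real) \<Rightarrow> real \<times> real \<Rightarrow> real \<times> real" where
  "hmap \<sigma>2 = (\<lambda>(x, y). (frac (x + \<sigma>2 y), y))"

definition vmap :: "(real \<Rightarrow> real) \<Rightarrow> real \<times> real \<Rightarrow> real \<times> real" where
  "vmap \<sigma>1 = (\<lambda>(x, y). (x, frac (y + \<sigma>1 x)))"

definition hinv :: "(real \<Rightarrow> real) \<Rightarrow> real \<times> real \<Rightarrow> real \<times> real" where
  "hinv \<sigma>2 = (\<lambda>(x, y). (frac (x - \<sigma>2 y), y))"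

definition vinv :: "(real \<Rightarrow> real) \<Rightarrow> real \<times> real \<Rightarrow> real \<times> real" where
  "vinv \<sigma>1 = (\<lambda>(x, y). (x, frac (y - \<sigma>1 x)))"

text \<open>Group generated by a set S of maps that is closed under inverses:
  all finite compositions of elements of S (including the identity).\<close>
inductive_set gen_group :: "('a \<Rightarrow> 'a) set \<Rightarrow> ('a \<Rightarrow> 'a) set" for S where
  gen_id: "id \<in> gen_group S"
| gen_base: "s \<in> S \<Longrightarrow> s \<in> gen_group S"
| gen_comp: "g \<in> gen_group S \<Longrightarrow> f \<in> gen_group S \<Longrightarrow> g \<circ> f \<in> gen_group S"

definition Gamma :: "(real \<Rightarrow> real) \<Rightarrow> (real \<Rightarrow> real) \<Rightarrow> (real \<times> real \<Rightarrow> real \<times> real) set" where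
  "Gamma \<sigma>1 \<sigma>2 = gen_group {hmap \<sigma>2, vmap \<sigma>1, hinv \<sigma>2, vinv \<sigma>1}"

definition ergodic_action :: "(real \<times> real) set \<Rightarrow> (real \<times> real \<Rightarrow> real \<times> real) set \<Rightarrow> bool" where
  "ergodic_action X G \<longleftrightarrow>
     (\<forall>A \<in> sets lborel. A \<subseteq> X \<longrightarrow> (\<forall>g \<in> G. g -` A \<inter> X = A) \<longrightarrow>
        emeasure lborel A = 0 \<or> emeasure lborel A = emeasure lborel X)"

end

theory Submission
  imports Defs
begin

text \<open>
  For almost every x the number \<open>\<sigma>1 x\<close> is irrational, and the vertical fibre over x of a
  \<open>\<Gamma>\<close>-invariant set A is invariant under rotation by \<open>\<sigma>1 x\<close>; by ergodicity of irrational
  rotations it has measure 0 or 1. Likewise for horizontal fibres and \<open>\<sigma>2\<close>. If m is the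
  measure of A, the set X of points with full vertical fibre and the set Y of points with full
  horizontal fibre both have measure m, and A is contained in \<open>X \<times> Y\<close> up to a null set, so
  \<open>m \<le> m\<^sup>2\<close>, which forces m to be 0 or 1.

  Ergodicity of an irrational rotation is proved directly. Let P be the 1-periodic lift of an
  invariant set. The measure of \<open>P \<inter> {a+s<..b+s}\<close> is 2-Lipschitz in s and constant on the
  dense set of orbit translations, hence constant in s. Consequently every translate of P agrees
  with P almost everywhere on (0,1], and integrating the indicator of
  \<open>{(s, y). y \<notin> P, s + y \<in> P}\<close> over \<open>(0,1]\<^sup>2\<close> in both orders yields
  \<open>|P \<inter> (0,1]| \<cdot> |(0,1] - P| = 0\<close>.
\<close>

lemma emeasure_lborel_vimage_plus:
  fixes c :: "'a::euclidean_space"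
  assumes "S \<in> sets borel"
  shows "emeasure lborel ((+) c -` S) = emeasure lborel S"
  using emeasure_distr[of "(+) c" lborel borel S] assms by (simp add: lborel_distr_plus)

lemma sets_borel_vimage_plus [measurable]:
  fixes c :: "'a::euclidean_space"
  shows "P \<in> sets borel \<Longrightarrow> (+) c -` P \<in> sets borel"
  by (rule measurable_sets_borel[of "(+) c" borel]) simp_all

lemma nn_integral_shifted_indicator_Ioc:
  fixes P :: "real set"
  assumes [measurable]: "P \<in> sets borel"
  shows "(\<integral>\<^sup>+y. indicator P (s + y) * indicator {a<..b} y \<partial>lborel)
           = emeasure lborel (P \<inter> {a+s<..b+s})"
proof -
  have "(\<integral>\<^sup>+y. indicator P (s + y) * indicator {a<..b} y \<partial>lborel)
      = (\<integral>\<^sup>+y. indicator ((+) s -` (P \<inter> {a+s<..b+s})) y \<partial>lborel)"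
    by (intro nn_integral_cong) (auto simp: indicator_def)
  also have "\<dots> = emeasure lborel ((+) s -` (P \<inter> {a+s<..b+s}))"
    by simp
  also have "\<dots> = emeasure lborel (P \<inter> {a+s<..b+s})"
    by (rule emeasure_lborel_vimage_plus) simp
  finally show ?thesis .
qed

lemma fmeasurable_lborel_Ioc [simp]: "{a<..b::real} \<in> fmeasurable lborel"
  by (rule fmeasurableI2[OF fmeasurable_cbox[of a b]]) auto

lemma fmeasurable_lborel_Int_Ioc [simp]:
  "P \<in> sets borel \<Longrightarrow> P \<inter> {a<..b::real} \<in> fmeasurable lborel"
  by (rule fmeasurableI2[OF fmeasurable_lborel_Ioc]) auto

lemma measure_Int_Ioc_shift_le:
  fixes P :: "real set"
  assumes [measurable]: "P \<in> sets borel"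
  shows "measure lborel (P \<inter> {a+s<..b+s}) \<le> measure lborel (P \<inter> {a+t<..b+t}) + 2 * \<bar>s - t\<bar>"
proof -
  define I1 where "I1 = {min (a+s) (a+t)<..max (a+s) (a+t)}"
  define I2 where "I2 = {min (b+s) (b+t)<..max (b+s) (b+t)}"
  have fin: "P \<inter> {a+t<..b+t} \<in> fmeasurable lborel" "I1 \<in> fmeasurable lborel" "I2 \<in> fmeasurable lborel"
    unfolding I1_def I2_def by simp_all
  have "P \<inter> {a+s<..b+s} \<subseteq> (P \<inter> {a+t<..b+t}) \<union> I1 \<union> I2"
    unfolding I1_def I2_def by auto
  then have "measure lborel (P \<inter> {a+s<..b+s}) \<le> measure lborel ((P \<inter> {a+t<..b+t}) \<union> I1 \<union> I2)"
    using fin by (intro measure_mono_fmeasurable fmeasurable.Un) auto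
  also have "\<dots> \<le> measure lborel (P \<inter> {a+t<..b+t}) + (measure lborel I1 + measure lborel I2)"
  proof -
    have m: "P \<inter> {a+t<..b+t} \<in> sets lborel" "I1 \<in> sets lborel" "I2 \<in> sets lborel"
      unfolding I1_def I2_def by simp_all
    show ?thesis
      using measure_Un_le[OF sets.Un[OF m(1,2)] m(3)] measure_Un_le[OF m(1,2)] by linarith
  qed
  also have "measure lborel I1 + measure lborel I2 = 2 * \<bar>s - t\<bar>"
    unfolding I1_def I2_def by (simp add: measure_lborel_Ioc max_def min_def abs_if)
  finally show ?thesis .
qed

lemma emeasure_Int_Ioc_shift_eq:
  fixes P D :: "real set"
  assumes [measurable]: "P \<in> sets borel"
    and dense: "closure D = UNIV" and inv: "\<And>t. t \<in> D \<Longrightarrow> (+) t -` P = P"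
  shows "emeasure lborel (P \<inter> {a+s<..b+s}) = emeasure lborel (P \<inter> {a<..b})"
proof -
  define g where "g s = measure lborel (P \<inter> {a+s<..b+s})" for s
  have g_D: "g t = g 0" if "t \<in> D" for t
  proof -
    have "t + y \<in> P \<longleftrightarrow> y \<in> P" for y
      using inv[OF that] by blast
    then have "P \<inter> {a<..b} = (+) t -` (P \<inter> {a+t<..b+t})"
      by auto
    then show ?thesis
      by (simp add: g_def measure_def emeasure_lborel_vimage_plus del: vimage_Int)
  qed
  have "\<bar>g s - g 0\<bar> \<le> 0 + e" if "e > 0" for e
  proof -
    have "s \<in> closure D"
      using dense by simp
    then obtain t where t: "t \<in> D" "dist t s < e / 2"
      using \<open>e > 0\<close> unfolding closure_approachable by (meson half_gt_zero)
    have "g s \<le> g t + 2 * \<bar>s - t\<bar>" "g t \<le> g s + 2 * \<bar>t - s\<bar>"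
      unfolding g_def by (intro measure_Int_Ioc_shift_le; simp)+
    then show ?thesis
      using t g_D by (auto simp: abs_le_iff abs_minus_commute dist_real_def)
  qed
  then have "g s = g 0"
    using field_le_epsilon[of "\<bar>g s - g 0\<bar>" 0] by simp
  then show ?thesis
    unfolding g_def by (simp add: emeasure_eq_measure2)
qed

lemma emeasure_Ioc_Int_vimage_plus_diff_eq_0:
  fixes P :: "real set"
  assumes [measurable]: "P \<in> sets borel"
    and shift: "\<And>a b s. emeasure lborel (P \<inter> {a+s<..b+s}) = emeasure lborel (P \<inter> {a<..b})"
  shows "emeasure lborel ({0<..1} \<inter> (+) s -` P - P) = 0"
proof -
  \<comment> \<open>Cutting down to (0,1] gives the rays \<open>{x<..}\<close> finite measure, so they determine \<open>N s\<close>.\<close>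
  define N where "N s = density lborel (indicator ({0<..1} \<inter> (+) s -` P))" for s
  have N: "emeasure (N s) X = emeasure lborel ({0<..1} \<inter> (+) s -` P \<inter> X)" if "X \<in> sets borel" for s X
    unfolding N_def using that by (intro emeasure_restricted) auto
  have N_Ioi: "emeasure (N s) {x<..} = emeasure lborel (P \<inter> {max 0 x<..1})" for s x
  proof -
    have "{0<..1} \<inter> (+) s -` P \<inter> {x<..} = (+) s -` (P \<inter> {max 0 x + s<..1 + s})"
      by auto
    then show ?thesis
      by (simp add: N emeasure_lborel_vimage_plus shift del: vimage_Int)
  qed
  have "N s = N 0"
  proof (rule measure_eqI_lessThan)
    show "emeasure (N s) {x<..} < \<infinity>" for x
      using N_Ioi fmeasurable_lborel_Int_Ioc[of P "max 0 x" 1] by (simp add: fmeasurable_def)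
    show "emeasure (N s) {x<..} = emeasure (N 0) {x<..}" for x
      by (simp only: N_Ioi)
  qed (simp_all add: N_def)
  then have "emeasure (N s) (- P) = emeasure (N 0) (- P)"
    by simp
  moreover have "(+) 0 -` P = P"
    by auto
  ultimately show ?thesis
    by (simp add: N Diff_eq)
qed

lemma emeasure_Ioc_null_or_conull_if_shift_invariant:
  fixes P :: "real set"
  assumes [measurable]: "P \<in> sets borel"
    and shift: "\<And>a b s. emeasure lborel (P \<inter> {a+s<..b+s}) = emeasure lborel (P \<inter> {a<..b})"
  shows "emeasure lborel (P \<inter> {0<..1}) = 0 \<or> emeasure lborel ({0<..1} - P) = 0"
proof -
  let ?c = "emeasure lborel (P \<inter> {0<..1})"
  define F :: "real \<Rightarrow> real \<Rightarrow> ennreal"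
    where "F s y = indicator {0<..1} s * indicator ({0<..1} - P) y * indicator P (s + y)" for s y
  have "?c * emeasure lborel ({0<..1} - P) = (\<integral>\<^sup>+y. indicator ({0<..1} - P) y * ?c \<partial>lborel)"
    by (simp add: nn_integral_multc mult.commute)
  also have "\<dots> = (\<integral>\<^sup>+y. \<integral>\<^sup>+s. F s y \<partial>lborel \<partial>lborel)"
  proof (rule nn_integral_cong)
    fix y
    have "(\<integral>\<^sup>+s. indicator P (s + y) * indicator {0<..1} s \<partial>lborel) = ?c"
      using nn_integral_shifted_indicator_Ioc[of P y 0 1] shift[of 0 y 1] by (simp add: add.commute)
    moreover have "(\<integral>\<^sup>+s. F s y \<partial>lborel)
        = indicator ({0<..1} - P) y * (\<integral>\<^sup>+s. indicator P (s + y) * indicator {0<..1} s \<partial>lborel)"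
      unfolding F_def by (subst nn_integral_cmult[symmetric]) (auto intro!: nn_integral_cong simp: ac_simps)
    ultimately show "indicator ({0<..1} - P) y * ?c = (\<integral>\<^sup>+s. F s y \<partial>lborel)"
      by simp
  qed
  also have "\<dots> = (\<integral>\<^sup>+s. \<integral>\<^sup>+y. F s y \<partial>lborel \<partial>lborel)"
    by (rule lborel_pair.Fubini') (simp add: F_def)
  also have "\<dots> = (\<integral>\<^sup>+s. indicator {0<..1} s * emeasure lborel ({0<..1} \<inter> (+) s -` P - P) \<partial>lborel)"
  proof (rule nn_integral_cong)
    fix s
    have "(\<integral>\<^sup>+y. F s y \<partial>lborel)
        = indicator {0<..1} s * (\<integral>\<^sup>+y. indicator ({0<..1} - P) y * indicator P (s + y) \<partial>lborel)"
      unfolding F_def by (subst nn_integral_cmult[symmetric]) (auto intro!: nn_integral_cong simp: ac_simps)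
    also have "(\<integral>\<^sup>+y. indicator ({0<..1} - P) y * indicator P (s + y) \<partial>lborel)
        = (\<integral>\<^sup>+y. indicator ({0<..1} \<inter> (+) s -` P - P) y \<partial>lborel)"
      by (intro nn_integral_cong) (auto simp: indicator_def)
    also have "\<dots> = emeasure lborel ({0<..1} \<inter> (+) s -` P - P)"
      by simp
    finally show "(\<integral>\<^sup>+y. F s y \<partial>lborel) = indicator {0<..1} s * emeasure lborel ({0<..1} \<inter> (+) s -` P - P)" .
  qed
  also have "\<dots> = 0"
    by (simp add: emeasure_Ioc_Int_vimage_plus_diff_eq_0[OF assms])
  finally show ?thesis
    by simp
qed

lemma closure_rotation_orbit_eq_UNIV:
  fixes \<alpha> :: real
  assumes "\<alpha> \<notin> \<rat>"
  shows "closure {real n * \<alpha> - of_int h | n h. True} = UNIV"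
proof -
  have "x \<in> closure {real n * \<alpha> - of_int h | n h. True}" for x
  proof (unfold closure_approachable, intro allI impI)
    fix \<epsilon> :: real
    assume "\<epsilon> > 0"
    then obtain h k where "k > 0" and close: "\<bar>of_int k * \<alpha> - of_int h - x\<bar> < \<epsilon>"
      using sequence_of_fractional_parts_is_dense[OF assms] by metis
    then have "real (nat k) = of_int k"
      by simp
    then have "dist (real (nat k) * \<alpha> - of_int h) x < \<epsilon>"
      using close by (simp add: dist_real_def)
    then show "\<exists>y\<in>{real n * \<alpha> - of_int h | n h. True}. dist y x < \<epsilon>"
      by blast
  qed
  then show ?thesis
    by auto
qed

lemma frac_orbit_mem_iff:
  assumes inv: "\<And>x. x \<in> torus \<Longrightarrow> x \<in> B \<longleftrightarrow> frac (x + \<alpha>) \<in> B"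
  shows "frac (x + real n * \<alpha>) \<in> B \<longleftrightarrow> frac x \<in> B"
proof (induction n)
  case (Suc n)
  have "frac (x + real (Suc n) * \<alpha>) = frac (frac (x + real n * \<alpha>) + \<alpha>)"
    by (simp add: algebra_simps)
  moreover have "frac (x + real n * \<alpha>) \<in> torus"
    by (simp add: torus_def frac_lt_1)
  ultimately show ?case
    using inv Suc by auto
qed simp

lemma vimage_plus_frac_vimage_eq:
  assumes inv: "\<And>x. x \<in> torus \<Longrightarrow> x \<in> B \<longleftrightarrow> frac (x + \<alpha>) \<in> B"
    and "t \<in> {real n * \<alpha> - of_int h | n h. True}"
  shows "(+) t -` frac -` B = frac -` B"
proof -
  obtain n h where "t = real n * \<alpha> - of_int h"
    using assms(2) by blast
  then have "t + y = (y + real n * \<alpha>) + of_int (- h)" for y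
    by simp
  then have "frac (t + y) = frac (y + real n * \<alpha>)" for y
    by (simp only: frac_add_of_int_right)
  then show ?thesis
    using frac_orbit_mem_iff[OF inv] by auto
qed

lemma emeasure_frac_vimage_Int_Ioc:
  fixes B :: "real set"
  assumes "B \<in> sets borel" and "B \<subseteq> torus"
  shows "emeasure lborel (frac -` B \<inter> {0<..1}) = emeasure lborel B"
proof (rule emeasure_eq_AE)
  have "AE x in lborel. x \<notin> {0, 1}"
    by (intro AE_not_in finite_imp_null_set_lborel) simp
  moreover have "x \<in> frac -` B \<inter> {0<..1} \<longleftrightarrow> x \<in> B" if "x \<notin> {0, 1}" for x
    using \<open>B \<subseteq> torus\<close> that by (auto simp: torus_def)
  ultimately show "AE x in lborel. x \<in> frac -` B \<inter> {0<..1} \<longleftrightarrow> x \<in> B"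
    by (auto elim: eventually_mono)
  have "frac \<in> borel_measurable (borel :: real measure)"
    unfolding frac_def by measurable
  then have "frac -` B \<in> sets borel"
    using assms(1) by (rule measurable_sets_borel)
  then show "frac -` B \<inter> {0<..1} \<in> sets lborel"
    by simp
qed (use assms in simp)

lemma irrational_rotation_ergodic:
  fixes B :: "real set"
  assumes [measurable]: "B \<in> sets borel" and "B \<subseteq> torus" and "\<alpha> \<notin> \<rat>"
    and inv: "\<And>x. x \<in> torus \<Longrightarrow> x \<in> B \<longleftrightarrow> frac (x + \<alpha>) \<in> B"
  shows "emeasure lborel B = 0 \<or> emeasure lborel B = 1"
proof -
  define P where "P = frac -` B"
  have "frac \<in> borel_measurable (borel :: real measure)"
    unfolding frac_def by measurable
  then have [measurable]: "P \<in> sets borel"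
    unfolding P_def by (rule measurable_sets_borel[OF _ assms(1)])
  have "emeasure lborel (P \<inter> {a+s<..b+s}) = emeasure lborel (P \<inter> {a<..b})" for a b s
  proof (rule emeasure_Int_Ioc_shift_eq)
    show "closure {real n * \<alpha> - of_int h | n h. True} = UNIV"
      using \<open>\<alpha> \<notin> \<rat>\<close> by (rule closure_rotation_orbit_eq_UNIV)
    show "(+) t -` P = P" if "t \<in> {real n * \<alpha> - of_int h | n h. True}" for t
      unfolding P_def using inv that by (rule vimage_plus_frac_vimage_eq)
  qed simp
  then have "emeasure lborel (P \<inter> {0<..1}) = 0 \<or> emeasure lborel ({0<..1} - P) = 0"
    by (intro emeasure_Ioc_null_or_conull_if_shift_invariant) auto
  moreover have "emeasure lborel (P \<inter> {0<..1}) + emeasure lborel ({0<..1} - P)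
      = emeasure lborel ((P \<inter> {0<..1}) \<union> ({0<..1} - P))"
    by (rule plus_emeasure) auto
  moreover have "(P \<inter> {0<..1}) \<union> ({0<..1} - P) = {0<..1}"
    by blast
  moreover have "emeasure lborel (P \<inter> {0<..1}) = emeasure lborel B"
    unfolding P_def using assms(1,2) by (rule emeasure_frac_vimage_Int_Ioc)
  ultimately show ?thesis
    by auto
qed

lemma emeasure_level_one_eq_nn_integral:
  fixes f :: "'a \<Rightarrow> ennreal"
  assumes [measurable]: "f \<in> borel_measurable M" and "AE x in M. f x \<in> {0, 1}"
  shows "emeasure M {x \<in> space M. f x = 1} = (\<integral>\<^sup>+x. f x \<partial>M)"
proof -
  have "emeasure M {x \<in> space M. f x = 1} = (\<integral>\<^sup>+x. indicator {x \<in> space M. f x = 1} x \<partial>M)"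
    by simp
  also have "\<dots> = (\<integral>\<^sup>+x. f x \<partial>M)"
  proof (rule nn_integral_cong_AE)
    show "AE x in M. indicator {x \<in> space M. f x = 1} x = f x"
      using assms(2) AE_space by eventually_elim auto
  qed
  finally show ?thesis .
qed

lemma AE_mem_imp_emeasure_eq_1:
  assumes "S \<in> sets M" and "emeasure M S \<in> {0, 1}"
  shows "AE x in M. x \<in> S \<longrightarrow> emeasure M S = 1"
proof (cases "emeasure M S = 1")
  case False
  with assms have "S \<in> null_sets M"
    by (simp add: null_sets_def)
  from AE_not_in[OF this] show ?thesis
    by (rule eventually_mono) simp
qed simp

lemma (in pair_sigma_finite) AE_mem_imp_full_fibers:
  assumes A [measurable]: "A \<in> sets (M1 \<Otimes>\<^sub>M M2)"
    and vert: "AE x in M1. emeasure M2 (Pair x -` A) \<in> {0, 1}"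
    and horiz: "AE y in M2. emeasure M1 ((\<lambda>x. (x, y)) -` A) \<in> {0, 1}"
  shows "AE x in M1. AE y in M2. (x, y) \<in> A \<longrightarrow>
    emeasure M2 (Pair x -` A) = 1 \<and> emeasure M1 ((\<lambda>x. (x, y)) -` A) = 1"
proof -
  have [measurable]: "{y \<in> space M2. emeasure M1 ((\<lambda>x. (x, y)) -` A) = 1} \<in> sets M2"
    using measurable_emeasure_Pair2[OF A] by measurable
  have "AE x in M1. AE y in M2. (x, y) \<in> A \<longrightarrow> emeasure M2 (Pair x -` A) = 1"
    using vert by eventually_elim (use AE_mem_imp_emeasure_eq_1[OF sets_Pair1[OF A]] in simp)
  moreover have "AE y in M2. AE x in M1. (x, y) \<in> A \<longrightarrow> emeasure M1 ((\<lambda>x. (x, y)) -` A) = 1"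
    using horiz by eventually_elim (use AE_mem_imp_emeasure_eq_1[OF sets_Pair2[OF A]] in simp)
  then have "AE x in M1. AE y in M2. (x, y) \<in> A \<longrightarrow> emeasure M1 ((\<lambda>x. (x, y)) -` A) = 1"
    by (subst AE_commute) measurable
  ultimately show ?thesis
  proof eventually_elim
    case (elim x)
    show ?case
      using eventually_conj[OF elim] by (rule eventually_mono) auto
  qed
qed

lemma (in pair_sigma_finite) emeasure_le_square_if_fibers_zero_one:
  assumes A [measurable]: "A \<in> sets (M1 \<Otimes>\<^sub>M M2)"
    and vert: "AE x in M1. emeasure M2 (Pair x -` A) \<in> {0, 1}"
    and horiz: "AE y in M2. emeasure M1 ((\<lambda>x. (x, y)) -` A) \<in> {0, 1}"
  shows "emeasure (M1 \<Otimes>\<^sub>M M2) A \<le> emeasure (M1 \<Otimes>\<^sub>M M2) A * emeasure (M1 \<Otimes>\<^sub>M M2) A"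
proof -
  define X where "X = {x \<in> space M1. emeasure M2 (Pair x -` A) = 1}"
  define Y where "Y = {y \<in> space M2. emeasure M1 ((\<lambda>x. (x, y)) -` A) = 1}"
  have [measurable]: "X \<in> sets M1" "Y \<in> sets M2"
    using measurable_emeasure_Pair1[OF A] measurable_emeasure_Pair2[OF A]
    unfolding X_def Y_def by measurable
  have "emeasure M1 X = emeasure (M1 \<Otimes>\<^sub>M M2) A"
    unfolding X_def M2.emeasure_pair_measure_alt[OF A]
    by (intro emeasure_level_one_eq_nn_integral measurable_emeasure_Pair1 A vert)
  moreover have "emeasure M2 Y = emeasure (M1 \<Otimes>\<^sub>M M2) A"
    unfolding Y_def emeasure_pair_measure_alt2[OF A]
    by (intro emeasure_level_one_eq_nn_integral measurable_emeasure_Pair2 A horiz)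
  moreover have "emeasure (M1 \<Otimes>\<^sub>M M2) A \<le> emeasure (M1 \<Otimes>\<^sub>M M2) (X \<times> Y)"
  proof (rule emeasure_mono_AE)
    have "A \<subseteq> space M1 \<times> space M2"
      using sets.sets_into_space[OF A] by (simp add: space_pair_measure)
    then have "AE x in M1. AE y in M2. (x, y) \<in> A \<longrightarrow> (x, y) \<in> X \<times> Y"
      using AE_mem_imp_full_fibers[OF A vert horiz]
      by (auto simp: X_def Y_def elim!: eventually_mono)
    then show "AE z in M1 \<Otimes>\<^sub>M M2. z \<in> A \<longrightarrow> z \<in> X \<times> Y"
      by (intro AE_pair_measure) measurable
  qed measurable
  ultimately show ?thesis
    by (simp add: M2.emeasure_pair_measure_Times)
qed

lemma ennreal_eq_0_or_1_if_le_square: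
  fixes m :: ennreal
  assumes "m \<le> m * m" and "m \<le> 1"
  shows "m = 0 \<or> m = 1"
proof -
  obtain r where r: "m = ennreal r" "0 \<le> r" "r \<le> 1"
    using \<open>m \<le> 1\<close> by (cases m) (auto simp: top_unique)
  then have "r \<le> r * r"
    using \<open>m \<le> m * m\<close> by (simp add: ennreal_mult[symmetric])
  then have "r = 0 \<or> r = 1"
    using r(2,3) by (metis antisym mult_le_cancel_left1 not_less)
  then show ?thesis
    using r(1) by auto
qed

lemma torus2_sets [measurable]: "torus2 \<in> sets borel"
proof -
  have "torus \<times> torus \<in> sets (lborel \<Otimes>\<^sub>M lborel)"
    by (intro pair_measureI) (simp_all add: torus_def)
  then show ?thesis
    by (simp only: lborel_prod sets_lborel torus2_def)
qed

lemma emeasure_torus2: "emeasure lborel torus2 = 1"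
proof -
  have "emeasure (lborel \<Otimes>\<^sub>M lborel) (torus \<times> torus) = 1"
    by (simp add: lborel.emeasure_pair_measure_Times torus_def)
  then show ?thesis
    by (simp only: lborel_prod torus2_def)
qed

lemma AE_irrational_value:
  fixes \<sigma> :: "real \<Rightarrow> real"
  assumes "\<sigma> \<in> borel_measurable (restrict_space lborel torus)"
    and "emeasure lborel {x \<in> torus. \<sigma> x \<in> \<rat>} = 0"
  shows "AE x in lborel. x \<in> torus \<longrightarrow> \<sigma> x \<notin> \<rat>"
proof -
  have "\<rat> \<in> sets (borel :: real measure)"
    by (rule sets.countable[OF _ countable_rat]) simp
  then have "\<sigma> -` \<rat> \<inter> space (restrict_space lborel torus) \<in> sets (restrict_space lborel torus)"
    by (rule measurable_sets[OF assms(1)])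
  then have "{x \<in> torus. \<sigma> x \<in> \<rat>} \<in> null_sets lborel"
    using assms(2) by (auto simp: sets_restrict_space_iff torus_def null_sets_def Int_def conj_commute)
  then show ?thesis
    by (auto dest: AE_not_in)
qed

lemma vertical_fiber_zero_one:
  assumes A: "A \<in> sets lborel" "A \<subseteq> torus2" and inv: "vmap \<sigma>1 -` A \<inter> torus2 = A"
    and irrational: "x \<in> torus \<longrightarrow> \<sigma>1 x \<notin> \<rat>"
  shows "emeasure lborel (Pair x -` A) \<in> {0, 1}"
proof (cases "x \<in> torus")
  case True
  have "A \<in> sets (lborel \<Otimes>\<^sub>M lborel)"
    using A(1) by (simp only: lborel_prod)
  then have "Pair x -` A \<in> sets borel"
    using sets_Pair1 by simp
  moreover have "Pair x -` A \<subseteq> torus"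
    using A(2) by (auto simp: torus2_def)
  moreover have "y \<in> Pair x -` A \<longleftrightarrow> frac (y + \<sigma>1 x) \<in> Pair x -` A" if "y \<in> torus" for y
  proof -
    have "(x, y) \<in> A \<longleftrightarrow> (x, y) \<in> vmap \<sigma>1 -` A \<inter> torus2"
      by (simp only: inv)
    also have "\<dots> \<longleftrightarrow> (x, frac (y + \<sigma>1 x)) \<in> A"
      using True that by (simp add: vmap_def torus2_def)
    finally show ?thesis
      by simp
  qed
  ultimately show ?thesis
    using irrational_rotation_ergodic[of "Pair x -` A" "\<sigma>1 x"] True irrational by simp
next
  case False
  then have "Pair x -` A = {}"
    using A(2) by (auto simp: torus2_def)
  then show ?thesis
    by simp
qed

lemma horizontal_fiber_zero_one:
  assumes A: "A \<in> sets lborel" "A \<subseteq> torus2" and inv: "hmap \<sigma>2 -` A \<inter> torus2 = A"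
    and irrational: "y \<in> torus \<longrightarrow> \<sigma>2 y \<notin> \<rat>"
  shows "emeasure lborel ((\<lambda>x. (x, y)) -` A) \<in> {0, 1}"
proof (cases "y \<in> torus")
  case True
  have "A \<in> sets (lborel \<Otimes>\<^sub>M lborel)"
    using A(1) by (simp only: lborel_prod)
  then have "(\<lambda>x. (x, y)) -` A \<in> sets borel"
    using sets_Pair2 by simp
  moreover have "(\<lambda>x. (x, y)) -` A \<subseteq> torus"
    using A(2) by (auto simp: torus2_def)
  moreover have "x \<in> (\<lambda>x. (x, y)) -` A \<longleftrightarrow> frac (x + \<sigma>2 y) \<in> (\<lambda>x. (x, y)) -` A" if "x \<in> torus" for x
  proof -
    have "(x, y) \<in> A \<longleftrightarrow> (x, y) \<in> hmap \<sigma>2 -` A \<inter> torus2"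
      by (simp only: inv)
    also have "\<dots> \<longleftrightarrow> (frac (x + \<sigma>2 y), y) \<in> A"
      using True that by (simp add: hmap_def torus2_def)
    finally show ?thesis
      by simp
  qed
  ultimately show ?thesis
    using irrational_rotation_ergodic[of "(\<lambda>x. (x, y)) -` A" "\<sigma>2 y"] True irrational by simp
next
  case False
  then have "(\<lambda>x. (x, y)) -` A = {}"
    using A(2) by (auto simp: torus2_def)
  then show ?thesis
    by simp
qed

theorem corollary7:
  fixes \<sigma>1 \<sigma>2 :: "real \<Rightarrow> real"
  assumes "\<sigma>1 ` torus \<subseteq> torus" and "\<sigma>2 ` torus \<subseteq> torus"
    and "\<sigma>1 \<in> borel_measurable (restrict_space lborel torus)"
    and "\<sigma>2 \<in> borel_measurable (restrict_space lborel torus)"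
    and "emeasure lborel {x \<in> torus. \<sigma>1 x \<in> \<rat>} = 0"
    and "emeasure lborel {x \<in> torus. \<sigma>2 x \<in> \<rat>} = 0"
  shows "ergodic_action torus2 (Gamma \<sigma>1 \<sigma>2)"
  unfolding ergodic_action_def
proof (intro ballI impI)
  fix A
  assume A: "A \<in> sets lborel" "A \<subseteq> torus2" and inv: "\<forall>g\<in>Gamma \<sigma>1 \<sigma>2. g -` A \<inter> torus2 = A"
  have "hmap \<sigma>2 \<in> Gamma \<sigma>1 \<sigma>2" "vmap \<sigma>1 \<in> Gamma \<sigma>1 \<sigma>2"
    unfolding Gamma_def by (auto intro: gen_group.gen_base)
  with inv have h_inv: "hmap \<sigma>2 -` A \<inter> torus2 = A" and v_inv: "vmap \<sigma>1 -` A \<inter> torus2 = A"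
    by auto
  have "AE x in lborel. emeasure lborel (Pair x -` A) \<in> {0, 1}"
    using AE_irrational_value[OF assms(3,5)]
    by eventually_elim (rule vertical_fiber_zero_one[OF A v_inv])
  moreover have "AE y in lborel. emeasure lborel ((\<lambda>x. (x, y)) -` A) \<in> {0, 1}"
    using AE_irrational_value[OF assms(4,6)]
    by eventually_elim (rule horizontal_fiber_zero_one[OF A h_inv])
  moreover have "A \<in> sets (lborel \<Otimes>\<^sub>M lborel)"
    using A(1) by (simp only: lborel_prod)
  ultimately have "emeasure (lborel \<Otimes>\<^sub>M lborel) A
      \<le> emeasure (lborel \<Otimes>\<^sub>M lborel) A * emeasure (lborel \<Otimes>\<^sub>M lborel) A"
    by (intro lborel_pair.emeasure_le_square_if_fibers_zero_one)
  then have "emeasure lborel A \<le> emeasure lborel A * emeasure lborel A"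
    by (simp only: lborel_prod)
  moreover have "emeasure lborel A \<le> emeasure lborel torus2"
    using A(2) by (intro emeasure_mono) simp_all
  ultimately show "emeasure lborel A = 0 \<or> emeasure lborel A = emeasure lborel torus2"
    using ennreal_eq_0_or_1_if_le_square by (simp add: emeasure_torus2)
qed

end
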